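(* Let $H$ be obtained from a graph $G$ on vertices $v_1,\dots,v_k$ by expanding each $v_i$ by the graph $M_i$. Then the number of minimal separators of $H$ is at most the number of minimal separators of $G$ plus $\sum_{i=1}^k$ (number of minimal separators of $M_i$).
   Context: Expansion: given a graph $G$ on vertices $v_1,\dots,v_k$ and pairwise disjoint graphs $M_i=(V_i,E_i)$, the graph $H$ obtained by expanding each $v_i$ by $M_i$ has vertex set $V_1\cup\dots\cup V_k$ and edge set $E_1\cup\dots\cup E_k\cup\{ab \mid a\in V_i, b\in V_j, v_iv_j\in E(G)\}$. A minimal separator is a set $S$ that, for some vertices $u,v$, separates $u$ from $v$ and is inclusion-minimal with this property. *)

theory Defs
  imports Main
begin

type_synonym 'a graph = "'a set \<times> 'a set set"

definition verts :: "'a graph \<Rightarrow> 'a set" where "verts G = fst G"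
definition edges :: "'a graph \<Rightarrow> 'a set set" where "edges G = snd G"

definition is_graph :: "'a graph \<Rightarrow> bool" where
  "is_graph G \<longleftrightarrow> finite (verts G) \<and>
     (\<forall>e\<in>edges G. \<exists>x y. e = {x, y} \<and> x \<noteq> y \<and> x \<in> verts G \<and> y \<in> verts G)"

definition connected_avoiding :: "'a graph \<Rightarrow> 'a set \<Rightarrow> 'a \<Rightarrow> 'a \<Rightarrow> bool" where
  "connected_avoiding G S u v \<longleftrightarrow>
     (\<lambda>x y. x \<in> verts G - S \<and> y \<in> verts G - S \<and> {x, y} \<in> edges G)\<^sup>*\<^sup>* u v"

definition separates :: "'a graph \<Rightarrow> 'a set \<Rightarrow> 'a \<Rightarrow> 'a \<Rightarrow> bool" where
  "separates G S u v \<longleftrightarrow> S \<subseteq> verts G \<and> u \<in> verts G - S \<and> v \<in> verts G - S \<and>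
     \<not> connected_avoiding G S u v"

definition minimal_separator :: "'a graph \<Rightarrow> 'a set \<Rightarrow> bool" where
  "minimal_separator G S \<longleftrightarrow>
     (\<exists>u v. separates G S u v \<and> (\<forall>T. T \<subset> S \<longrightarrow> \<not> separates G T u v))"

definition minimal_separators :: "'a graph \<Rightarrow> 'a set set" where
  "minimal_separators G = {S. minimal_separator G S}"

definition expand :: "'v graph \<Rightarrow> ('v \<Rightarrow> 'a graph) \<Rightarrow> 'a graph" where
  "expand G M =
     ((\<Union>v\<in>verts G. verts (M v)),
      (\<Union>v\<in>verts G. edges (M v)) \<union>
      {{a, b} | a b v w. v \<in> verts G \<and> w \<in> verts G \<and> a \<in> verts (M v) \<and> b \<in> verts (M w)
                          \<and> {v, w} \<in> edges G})"

end

theory Submission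
  imports Defs
begin

(* Every vertex x of H lies in exactly one block verts (M v).  Take a minimal
   separator S of H together with vertices u and v it separates minimally.
   - If u and v lie in different blocks i and j, then S is the blow-up of the set
     S' of blocks entirely contained in S, and S' is a minimal separator of G
     (connections in H project to connections in G and vice versa).
   - If u and v lie in the same block i, then S contains every block adjacent to i,
     and S is that neighbourhood together with a minimal separator S \<inter> verts (M i)
     of M i, since a path leaving block i must cross the neighbourhood.
   Hence the minimal separators of H are covered by the image of those of G plus
   the images of those of the M v, and a counting lemma gives the bound. *)

lemma finite_minimal_separators:
  assumes "finite (verts X)"
  shows "finite (minimal_separators X)"
proof -
  have "minimal_separators X \<subseteq> Pow (verts X)"
    unfolding minimal_separators_def minimal_separator_def separates_def by blast
  with assms show ?thesis by (meson finite_Pow_iff finite_subset)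
qed

lemma connected_avoiding_snoc:
  assumes "connected_avoiding X S a b" "b \<in> verts X - S" "c \<in> verts X - S" "{b, c} \<in> edges X"
  shows "connected_avoiding X S a c"
  using assms unfolding connected_avoiding_def by (simp add: rtranclp.rtrancl_into_rtrancl)

lemma connected_avoiding_transfer:
  assumes "connected_avoiding X T a b"
    and "\<And>x y. x \<in> verts X - T \<Longrightarrow> y \<in> verts X - T \<Longrightarrow> {x, y} \<in> edges X
             \<Longrightarrow> x \<in> verts Y - S \<and> y \<in> verts Y - S \<and> {x, y} \<in> edges Y"
  shows "connected_avoiding Y S a b"
  using assms(1) unfolding connected_avoiding_def
  by (rule mono_rtranclp[rule_format, rotated]) (use assms(2) in blast)

lemma card_le_of_cover:
  assumes "finite A" "finite I" "\<And>i. i \<in> I \<Longrightarrow> finite (B i)"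
    and cover: "X \<subseteq> f ` A \<union> (\<Union>i\<in>I. g i ` B i)"
  shows "card X \<le> card A + (\<Sum>i\<in>I. card (B i))"
proof -
  have fin: "finite (f ` A \<union> (\<Union>i\<in>I. g i ` B i))" using assms(1-3) by blast
  have "card X \<le> card (f ` A \<union> (\<Union>i\<in>I. g i ` B i))" using card_mono[OF fin cover] .
  also have "\<dots> \<le> card (f ` A) + card (\<Union>i\<in>I. g i ` B i)" by (rule card_Un_le)
  also have "\<dots> \<le> card A + (\<Sum>i\<in>I. card (g i ` B i))"
    using card_image_le[OF assms(1)] card_UN_le[OF assms(2)] by (rule add_mono)
  also have "\<dots> \<le> card A + (\<Sum>i\<in>I. card (B i))"
    using assms(3) by (intro add_left_mono sum_mono card_image_le)
  finally show ?thesis .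
qed

locale expansion =
  fixes G :: "'v graph" and M :: "'v \<Rightarrow> 'a graph"
  assumes graph_G: "is_graph G"
    and blocks_nonempty_graphs: "\<forall>v\<in>verts G. is_graph (M v) \<and> verts (M v) \<noteq> {}"
    and blocks_disjoint: "\<forall>v\<in>verts G. \<forall>w\<in>verts G. v \<noteq> w \<longrightarrow> verts (M v) \<inter> verts (M w) = {}"
begin

abbreviation H :: "'a graph" where "H \<equiv> expand G M"

definition blow_up :: "'v set \<Rightarrow> 'a set" where
  "blow_up S' = (\<Union>w\<in>S'. verts (M w))"

definition neighbour_blocks :: "'v \<Rightarrow> 'a set" where
  "neighbour_blocks i = blow_up {w \<in> verts G. {i, w} \<in> edges G}"

definition full_blocks :: "'a set \<Rightarrow> 'v set" where
  "full_blocks S = {w \<in> verts G. verts (M w) \<subseteq> S}"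

lemma verts_H: "verts H = (\<Union>v\<in>verts G. verts (M v))"
  by (simp add: expand_def verts_def)

lemma edges_H: "edges H = (\<Union>v\<in>verts G. edges (M v)) \<union>
      {{a, b} | a b v w. v \<in> verts G \<and> w \<in> verts G \<and> a \<in> verts (M v) \<and> b \<in> verts (M w)
                          \<and> {v, w} \<in> edges G}"
  by (simp add: expand_def edges_def)

lemma block_unique:
  "x \<in> verts (M v) \<Longrightarrow> x \<in> verts (M w) \<Longrightarrow> v \<in> verts G \<Longrightarrow> w \<in> verts G \<Longrightarrow> v = w"
  using blocks_disjoint by blast

lemma edge_G:
  assumes "{v, w} \<in> edges G"
  shows "v \<in> verts G \<and> w \<in> verts G \<and> v \<noteq> w"
  using graph_G assms unfolding is_graph_def by (metis doubleton_eq_iff)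

lemma edge_block:
  assumes "w \<in> verts G" "{x, y} \<in> edges (M w)"
  shows "x \<in> verts (M w) \<and> y \<in> verts (M w)"
  using blocks_nonempty_graphs assms unfolding is_graph_def by (metis doubleton_eq_iff)

lemma block_edge_in_H: "w \<in> verts G \<Longrightarrow> e \<in> edges (M w) \<Longrightarrow> e \<in> edges H"
  unfolding edges_H by blast

lemma cross_edge_in_H:
  "{v, w} \<in> edges G \<Longrightarrow> a \<in> verts (M v) \<Longrightarrow> b \<in> verts (M w) \<Longrightarrow> {a, b} \<in> edges H"
  using edge_G unfolding edges_H by blast

lemma edge_H_cases:
  assumes "{x, y} \<in> edges H"
  obtains w where "w \<in> verts G" "x \<in> verts (M w)" "y \<in> verts (M w)" "{x, y} \<in> edges (M w)"
    | v w where "x \<in> verts (M v)" "y \<in> verts (M w)" "{v, w} \<in> edges G"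
proof -
  consider (inner) w where "w \<in> verts G" "{x, y} \<in> edges (M w)"
    | (cross) a b v w where "{x, y} = {a, b}" "a \<in> verts (M v)" "b \<in> verts (M w)" "{v, w} \<in> edges G"
    using assms unfolding edges_H by blast
  then show thesis
  proof cases
    case inner
    then show thesis using that(1) edge_block by blast
  next
    case cross
    then show thesis using that(2) by (metis doubleton_eq_iff insert_commute)
  qed
qed

lemma blow_up_subset_H: "S' \<subseteq> verts G \<Longrightarrow> blow_up S' \<subseteq> verts H"
  unfolding blow_up_def verts_H by blast

lemma blow_up_full_blocks: "blow_up (full_blocks S) \<subseteq> S"
  unfolding blow_up_def full_blocks_def by blast

lemma not_in_blow_up:
  "x \<in> verts (M i) \<Longrightarrow> i \<in> verts G \<Longrightarrow> i \<notin> T \<Longrightarrow> T \<subseteq> verts G \<Longrightarrow> x \<notin> blow_up T"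
  unfolding blow_up_def using block_unique by blast

(* Blocks are nonempty and disjoint, so blowing up is strictly monotone. *)
lemma blow_up_strict_mono:
  assumes "T \<subset> S'" "S' \<subseteq> verts G"
  shows "blow_up T \<subset> blow_up S'"
proof -
  obtain w where w: "w \<in> S'" "w \<notin> T" using assms(1) by blast
  then obtain x where x: "x \<in> verts (M w)" using assms(2) blocks_nonempty_graphs by blast
  have "x \<in> blow_up S'" using w x unfolding blow_up_def by blast
  moreover have "x \<notin> blow_up T" using not_in_blow_up[OF x] w assms by blast
  moreover have "blow_up T \<subseteq> blow_up S'" using assms(1) unfolding blow_up_def by blast
  ultimately show ?thesis by blast
qed

lemma neighbour_blocks_disjoint:
  assumes "i \<in> verts G"
  shows "neighbour_blocks i \<inter> verts (M i) = {}"
  using assms block_unique edge_G unfolding neighbour_blocks_def blow_up_def by blast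

lemma neighbour_blocks_subset_H: "neighbour_blocks i \<subseteq> verts H"
  unfolding neighbour_blocks_def by (rule blow_up_subset_H) blast

lemma connected_project:
  assumes conn: "connected_avoiding H (blow_up T) a b"
    and "a \<in> verts (M p)" "p \<in> verts G" "b \<in> verts (M q)" "q \<in> verts G"
  shows "connected_avoiding G T p q"
proof -
  have "\<forall>q\<in>verts G. b \<in> verts (M q) \<longrightarrow> connected_avoiding G T p q"
    using conn[unfolded connected_avoiding_def]
  proof (induction rule: rtranclp_induct)
    case base
    then show ?case
      using assms(2,3) block_unique unfolding connected_avoiding_def by blast
  next
    case (step y z)
    show ?case
    proof (intro ballI impI)
      fix q assume q: "q \<in> verts G" "z \<in> verts (M q)"
      have y: "y \<in> verts H - blow_up T" "z \<in> verts H - blow_up T" "{y, z} \<in> edges H"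
        using step.hyps(2) by auto
      then obtain q' where q': "q' \<in> verts G" "y \<in> verts (M q')" unfolding verts_H by auto
      with step.IH have IH: "connected_avoiding G T p q'" by blast
      from y(3) show "connected_avoiding G T p q"
      proof (cases rule: edge_H_cases)
        case (1 w)
        then have "q' = q" using block_unique q q' by metis
        then show ?thesis using IH by simp
      next
        case (2 v w)
        then have "v = q'" "w = q" using block_unique edge_G q q' by metis+
        moreover have "q' \<notin> T" "q \<notin> T" using y q q' unfolding blow_up_def by blast+
        ultimately show ?thesis
          using connected_avoiding_snoc[OF IH] q q' \<open>{v, w} \<in> edges G\<close> by blast
      qed
    qed
  qed
  then show ?thesis using assms(4,5) by blast
qed

lemma connected_lift:
  assumes "connected_avoiding G (full_blocks S) p q" "p \<noteq> q"
    and a: "a \<in> verts (M p) - S" and "b \<in> verts (M q) - S"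
  shows "connected_avoiding H S a b"
proof -
  let ?R = "\<lambda>x y. x \<in> verts G - full_blocks S \<and> y \<in> verts G - full_blocks S \<and> {x, y} \<in> edges G"
  have "?R\<^sup>*\<^sup>* p q" using assms(1) unfolding connected_avoiding_def .
  then have "?R\<^sup>+\<^sup>+ p q" using assms(2) by (auto dest: rtranclpD)
  then have "\<forall>b\<in>verts (M q) - S. connected_avoiding H S a b"
  proof (induction rule: tranclp_induct)
    case (base q)
    show ?case
    proof
      fix b assume b: "b \<in> verts (M q) - S"
      have "connected_avoiding H S a a" unfolding connected_avoiding_def by simp
      moreover have "a \<in> verts H - S" "b \<in> verts H - S"
        using a b base unfolding verts_H by blast+
      moreover have "{a, b} \<in> edges H" using a b base cross_edge_in_H by blast
      ultimately show "connected_avoiding H S a b" by (rule connected_avoiding_snoc)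
    qed
  next
    case (step y z)
    then obtain r where r: "r \<in> verts (M y) - S" and yz: "y \<in> verts G" "{y, z} \<in> edges G"
      unfolding full_blocks_def by blast
    have ar: "connected_avoiding H S a r" using step.IH r by blast
    show ?case
    proof
      fix b assume b: "b \<in> verts (M z) - S"
      have "r \<in> verts H - S" "b \<in> verts H - S"
        using r b yz edge_G unfolding verts_H by blast+
      moreover have "{r, b} \<in> edges H" using r b yz cross_edge_in_H by blast
      ultimately show "connected_avoiding H S a b" by (rule connected_avoiding_snoc[OF ar])
    qed
  qed
  then show ?thesis using assms(4) by blast
qed

lemma connected_confined:
  assumes "connected_avoiding H (neighbour_blocks i \<union> T) a b" "a \<in> verts (M i)" "i \<in> verts G"
  shows "b \<in> verts (M i) \<and> connected_avoiding (M i) T a b"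
  using assms(1) unfolding connected_avoiding_def
proof (induction rule: rtranclp_induct)
  case base
  then show ?case using assms(2) by simp
next
  case (step y z)
  then have yz: "y \<notin> neighbour_blocks i \<union> T" "z \<notin> neighbour_blocks i \<union> T" "{y, z} \<in> edges H"
    and y: "y \<in> verts (M i)" by auto
  from yz(3) show ?case
  proof (cases rule: edge_H_cases)
    case (1 w)
    then have "w = i" using block_unique y assms(3) by blast
    then show ?thesis using 1 yz step.IH edge_block
      by (auto elim: rtranclp.rtrancl_into_rtrancl)
  next
    case (2 v w)
    then have "v = i" using block_unique edge_G y assms(3) by blast
    then have "z \<in> neighbour_blocks i"
      using 2 edge_G unfolding neighbour_blocks_def blow_up_def by blast
    with yz show ?thesis by blast
  qed
qed

lemma full_blocks_separate:
  assumes "separates H S u v" "u \<in> verts (M i)" "v \<in> verts (M j)" "i \<in> verts G" "j \<in> verts G" "i \<noteq> j"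
  shows "separates G (full_blocks S) i j"
proof -
  have "\<not> connected_avoiding G (full_blocks S) i j"
    using connected_lift[of S i j u v] assms unfolding separates_def by blast
  moreover have "i \<notin> full_blocks S" "j \<notin> full_blocks S"
    using assms unfolding separates_def full_blocks_def by blast+
  ultimately show ?thesis
    using assms(4,5) unfolding separates_def full_blocks_def by blast
qed

lemma blow_up_separates:
  assumes "separates G T i j" "u \<in> verts (M i)" "v \<in> verts (M j)"
  shows "separates H (blow_up T) u v"
proof -
  have T: "T \<subseteq> verts G" "i \<in> verts G - T" "j \<in> verts G - T"
    using assms(1) unfolding separates_def by auto
  have "u \<notin> blow_up T" "v \<notin> blow_up T"
    using not_in_blow_up assms(2,3) T by blast+
  moreover have "\<not> connected_avoiding H (blow_up T) u v"
    using connected_project assms T unfolding separates_def by blast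
  ultimately show ?thesis
    using blow_up_subset_H[OF T(1)] assms(2,3) T unfolding separates_def verts_H by blast
qed

(* A separator of two vertices of block i contains all neighbouring blocks of i,
   since each of their vertices is adjacent to both. *)
lemma neighbour_blocks_in_separator:
  assumes "separates H S u v" "u \<in> verts (M i)" "v \<in> verts (M i)"
  shows "neighbour_blocks i \<subseteq> S"
proof
  fix z assume "z \<in> neighbour_blocks i"
  then obtain w where w: "{i, w} \<in> edges G" "z \<in> verts (M w)"
    unfolding neighbour_blocks_def blow_up_def by blast
  have "{u, z} \<in> edges H" using cross_edge_in_H[OF w(1) assms(2) w(2)] .
  moreover have "{z, v} \<in> edges H"
    using cross_edge_in_H[of w i z v] w assms(3) by (simp add: insert_commute)
  moreover have "z \<in> verts H" using w edge_G unfolding verts_H by blast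
  ultimately show "z \<in> S"
    using assms(1) connected_avoiding_snoc[of H S u u z] connected_avoiding_snoc[of H S u z v]
    unfolding separates_def connected_avoiding_def by blast
qed

lemma separator_trace:
  assumes "separates H S u v" "u \<in> verts (M i)" "v \<in> verts (M i)" "i \<in> verts G"
  shows "separates (M i) (S \<inter> verts (M i)) u v"
proof -
  have "\<not> connected_avoiding (M i) (S \<inter> verts (M i)) u v"
  proof
    assume "connected_avoiding (M i) (S \<inter> verts (M i)) u v"
    then have "connected_avoiding H S u v"
      by (rule connected_avoiding_transfer)
         (use assms(4) edge_block block_edge_in_H in \<open>auto simp: verts_H\<close>)
    with assms(1) show False unfolding separates_def by blast
  qed
  with assms show ?thesis unfolding separates_def by blast
qed

lemma neighbour_blocks_union_separates:
  assumes "separates (M i) T u v" "i \<in> verts G"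
  shows "separates H (neighbour_blocks i \<union> T) u v"
proof -
  have T: "T \<subseteq> verts (M i)" "u \<in> verts (M i) - T" "v \<in> verts (M i) - T"
    using assms(1) unfolding separates_def by auto
  have "u \<notin> neighbour_blocks i" "v \<notin> neighbour_blocks i"
    using neighbour_blocks_disjoint[OF assms(2)] T by blast+
  moreover have "\<not> connected_avoiding H (neighbour_blocks i \<union> T) u v"
    using connected_confined assms T unfolding separates_def by blast
  ultimately show ?thesis
    using neighbour_blocks_subset_H T assms(2) unfolding separates_def verts_H by blast
qed

lemma minimal_separator_between_blocks:
  assumes sep: "separates H S u v" and min: "\<forall>T. T \<subset> S \<longrightarrow> \<not> separates H T u v"
    and "u \<in> verts (M i)" "v \<in> verts (M j)" "i \<in> verts G" "j \<in> verts G" "i \<noteq> j"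
  shows "S \<in> blow_up ` minimal_separators G"
proof -
  define S' where "S' = full_blocks S"
  have sepG: "separates G S' i j" unfolding S'_def using full_blocks_separate assms by blast
  have S'G: "S' \<subseteq> verts G" unfolding S'_def full_blocks_def by blast
  have sepS': "separates H (blow_up S') u v" using blow_up_separates[OF sepG assms(3,4)] .
  have "blow_up S' \<subseteq> S" unfolding S'_def by (rule blow_up_full_blocks)
  then have "blow_up S' = S" using min sepS' psubsetI by metis
  moreover have "\<not> separates G T i j" if "T \<subset> S'" for T
    using min blow_up_separates[OF _ assms(3,4)] blow_up_strict_mono[OF that S'G]
      \<open>blow_up S' = S\<close> by blast
  ultimately show ?thesis
    using sepG unfolding minimal_separators_def minimal_separator_def by blast
qed

lemma minimal_separator_within_block:
  assumes sep: "separates H S u v" and min: "\<forall>T. T \<subset> S \<longrightarrow> \<not> separates H T u v"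
    and "u \<in> verts (M i)" "v \<in> verts (M i)" "i \<in> verts G"
  shows "S \<in> (\<lambda>T. neighbour_blocks i \<union> T) ` minimal_separators (M i)"
proof -
  define T where "T = S \<inter> verts (M i)"
  have sepM: "separates (M i) T u v" unfolding T_def using separator_trace assms by blast
  have sepNT: "separates H (neighbour_blocks i \<union> T) u v"
    using neighbour_blocks_union_separates[OF sepM assms(5)] .
  have "neighbour_blocks i \<subseteq> S" using neighbour_blocks_in_separator assms by blast
  then have "neighbour_blocks i \<union> T \<subseteq> S" unfolding T_def by blast
  then have "neighbour_blocks i \<union> T = S" using min sepNT psubsetI by metis
  moreover have "\<not> separates (M i) T' u v" if "T' \<subset> T" for T'
  proof
    assume "separates (M i) T' u v"
    then have "separates H (neighbour_blocks i \<union> T') u v"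
      using neighbour_blocks_union_separates assms(5) by blast
    moreover have "neighbour_blocks i \<union> T' \<subset> S"
      using that \<open>neighbour_blocks i \<union> T = S\<close> neighbour_blocks_disjoint[OF assms(5)]
      unfolding T_def by blast
    ultimately show False using min by blast
  qed
  ultimately show ?thesis
    using sepM unfolding minimal_separators_def minimal_separator_def by blast
qed

theorem minimal_separators_expand_cover:
  "minimal_separators H \<subseteq>
     blow_up ` minimal_separators G \<union>
     (\<Union>i\<in>verts G. (\<lambda>T. neighbour_blocks i \<union> T) ` minimal_separators (M i))"
proof
  fix S assume "S \<in> minimal_separators H"
  then obtain u v where sep: "separates H S u v" and min: "\<forall>T. T \<subset> S \<longrightarrow> \<not> separates H T u v"
    unfolding minimal_separators_def minimal_separator_def by blast
  obtain i where i: "i \<in> verts G" "u \<in> verts (M i)"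
    using sep unfolding separates_def verts_H by blast
  obtain j where j: "j \<in> verts G" "v \<in> verts (M j)"
    using sep unfolding separates_def verts_H by blast
  show "S \<in> blow_up ` minimal_separators G \<union>
      (\<Union>i\<in>verts G. (\<lambda>T. neighbour_blocks i \<union> T) ` minimal_separators (M i))"
  proof (cases "i = j")
    case True
    then show ?thesis using minimal_separator_within_block[OF sep min i(2)] i j by blast
  next
    case False
    then show ?thesis using minimal_separator_between_blocks[OF sep min i(2) j(2) i(1) j(1)] by blast
  qed
qed

end

theorem corollary2:
  fixes G :: "'v graph" and M :: "'v \<Rightarrow> 'a graph"
  assumes "is_graph G"
    and "\<forall>v\<in>verts G. is_graph (M v) \<and> verts (M v) \<noteq> {}"
    and "\<forall>v\<in>verts G. \<forall>w\<in>verts G. v \<noteq> w \<longrightarrow> verts (M v) \<inter> verts (M w) = {}"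
  shows "card (minimal_separators (expand G M))
           \<le> card (minimal_separators G) + (\<Sum>v\<in>verts G. card (minimal_separators (M v)))"
proof -
  interpret expansion G M using assms by unfold_locales
  have "finite (verts G)" using assms(1) unfolding is_graph_def by blast
  moreover have "finite (minimal_separators (M v))" if "v \<in> verts G" for v
    using assms(2) that finite_minimal_separators unfolding is_graph_def by blast
  ultimately show ?thesis
    using card_le_of_cover[OF finite_minimal_separators _ _ minimal_separators_expand_cover]
    by blast
qed

end
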